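(* There is an absolute constant $c>0$ such that for all integers $n\ge 1$ and $1\le d<n$, the function $\mathrm{HAM}^{(d)}_n$ has a realization with margin at least $c/d$; that is, $\gamma(\mathrm{HAM}^{(d)}_n)=\Omega(1/d)$.
   Context: $\mathrm{HAM}^{(d)}_n:\{0,1\}^n\times\{0,1\}^n\to\{0,1\}$ is defined by $\mathrm{HAM}^{(d)}_n(x,y)=1$ iff the Hamming distance between $x$ and $y$ is at most $d$. An assignment of real unit vectors $\alpha_x,\beta_y$ is a realization of a Boolean function $f$ with margin $\gamma>0$ if $\langle\alpha_x,\beta_y\rangle\ge\gamma$ whenever $f(x,y)=0$ and $\langle\alpha_x,\beta_y\rangle\le-\gamma$ whenever $f(x,y)=1$; $\gamma(f)$ denotes the supremum of margins over all realizations of $f$ in any dimension. *)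

theory Defs
  imports Complex_Main
begin

definition cube :: "nat \<Rightarrow> bool list set" where
  "cube n = {x. length x = n}"

definition hamming_dist :: "bool list \<Rightarrow> bool list \<Rightarrow> nat" where
  "hamming_dist x y = card {i. i < length x \<and> x ! i \<noteq> y ! i}"

definition HAM :: "nat \<Rightarrow> nat \<Rightarrow> bool list \<Rightarrow> bool list \<Rightarrow> bool" where
  "HAM n d x y = (hamming_dist x y \<le> d)"

text \<open>Vectors in R^k represented as functions nat => real, using coordinates 0..k-1.\<close>
definition ip :: "nat \<Rightarrow> (nat \<Rightarrow> real) \<Rightarrow> (nat \<Rightarrow> real) \<Rightarrow> real" where
  "ip k u v = (\<Sum>i<k. u i * v i)"

definition is_realization ::
  "'a set \<Rightarrow> 'b set \<Rightarrow> ('a \<Rightarrow> 'b \<Rightarrow> bool) \<Rightarrow> nat \<Rightarrow>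
   ('a \<Rightarrow> nat \<Rightarrow> real) \<Rightarrow> ('b \<Rightarrow> nat \<Rightarrow> real) \<Rightarrow> real \<Rightarrow> bool" where
  "is_realization X Y f k \<alpha> \<beta> g \<longleftrightarrow>
     g > 0 \<and>
     (\<forall>x\<in>X. ip k (\<alpha> x) (\<alpha> x) = 1) \<and>
     (\<forall>y\<in>Y. ip k (\<beta> y) (\<beta> y) = 1) \<and>
     (\<forall>x\<in>X. \<forall>y\<in>Y. (\<not> f x y \<longrightarrow> ip k (\<alpha> x) (\<beta> y) \<ge> g) \<and>
                     (f x y \<longrightarrow> ip k (\<alpha> x) (\<beta> y) \<le> - g))"

end

theory Submission
  imports Defs
begin

text \<open>
  Send each bit to a unit vector of \<open>\<real>\<^sup>2\<close> such that equal bits have inner product 1 and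
  different bits inner product \<open>r\<close>; the tensor product of these vectors over the bits of
  \<open>x \<in> {0,1}\<^sup>n\<close> gives unit vectors with \<open>\<langle>u\<^sub>x, u\<^sub>y\<rangle> = r\<^bsup>dist(x,y)\<^esup>\<close>.
  For \<open>r = 1 - 1/(2d)\<close> the values \<open>r\<^sup>h\<close> with \<open>h \<le> d\<close> and with \<open>h > d\<close> lie on either side
  of the midpoint \<open>\<theta> = r\<^sup>d(1+r)/2\<close> of \<open>r\<^sup>d\<close> and \<open>r\<^bsup>d+1\<^esup>\<close>, at distance at least
  \<open>r\<^sup>d(1-r)/2 \<ge> 1/(8d)\<close> by Bernoulli's inequality. Appending the coordinate \<open>\<surd>\<theta>\<close> to
  \<open>u\<^sub>x\<close> and to \<open>-u\<^sub>y\<close> and normalising turns this threshold into a sign, losing the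
  factor \<open>1 + \<theta> \<le> 2\<close> in the margin.
\<close>

definition tensor :: "nat \<Rightarrow> (nat \<Rightarrow> real) \<Rightarrow> (nat \<Rightarrow> real) \<Rightarrow> nat \<Rightarrow> real" where
  "tensor n u v j = u (j div n) * v (j mod n)"

lemma ip_tensor:
  "ip (m * n) (tensor n u v) (tensor n u' v') = ip m u u' * ip n v v'"
proof -
  have block: "(\<Sum>j\<in>{i * n..<i * n + n}. tensor n u v j * tensor n u' v' j) = u i * u' i * ip n v v'"
    for i
  proof -
    have "(\<Sum>j\<in>{i * n..<i * n + n}. tensor n u v j * tensor n u' v' j)
        = (\<Sum>k\<in>{0..<n}. tensor n u v (k + i * n) * tensor n u' v' (k + i * n))"
      using sum.shift_bounds_nat_ivl[of _ 0 "i * n" n] by (simp add: add.commute)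
    also have "\<dots> = (\<Sum>k<n. u i * u' i * (v k * v' k))"
      by (intro sum.cong) (auto simp: tensor_def lessThan_atLeast0)
    finally show ?thesis by (simp add: ip_def sum_distrib_left)
  qed
  have "ip (m * n) (tensor n u v) (tensor n u' v')
      = (\<Sum>i<m. \<Sum>j\<in>{i * n..<i * n + n}. tensor n u v j * tensor n u' v' j)"
    unfolding ip_def by (rule sum.nat_group[symmetric])
  also have "\<dots> = ip m u u' * ip n v v'"
    by (simp add: block ip_def sum_distrib_right)
  finally show ?thesis .
qed

definition bit_vec :: "real \<Rightarrow> bool \<Rightarrow> nat \<Rightarrow> real" where
  "bit_vec r a i =
     (if i = 0 then sqrt ((1 + r) / 2) else if a then sqrt ((1 - r) / 2) else - sqrt ((1 - r) / 2))"

lemma ip_bit_vec: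
  assumes "\<bar>r\<bar> \<le> 1"
  shows "ip 2 (bit_vec r a) (bit_vec r b) = (if a = b then 1 else r)"
proof -
  have "sqrt ((1 + r) / 2) * sqrt ((1 + r) / 2) = (1 + r) / 2"
    and "sqrt ((1 - r) / 2) * sqrt ((1 - r) / 2) = (1 - r) / 2"
    using assms by (simp_all add: real_sqrt_mult_self)
  then show ?thesis
    by (auto simp: ip_def bit_vec_def numeral_2_eq_2 lessThan_Suc field_simps)
qed

fun cube_vec :: "real \<Rightarrow> bool list \<Rightarrow> nat \<Rightarrow> real" where
  "cube_vec r [] = (\<lambda>_. 1)"
| "cube_vec r (a # x) = tensor (2 ^ length x) (bit_vec r a) (cube_vec r x)"

lemma hamming_dist_Cons:
  assumes "length x = length y"
  shows "hamming_dist (a # x) (b # y) = (if a = b then 0 else 1) + hamming_dist x y"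
proof -
  let ?D = "{i. i < length x \<and> x ! i \<noteq> y ! i}"
  let ?D' = "{i. i < length (a # x) \<and> (a # x) ! i \<noteq> (b # y) ! i}"
  have "i \<in> ?D' \<longleftrightarrow> i \<in> (if a = b then {} else {0}) \<union> Suc ` ?D" for i
    by (cases i) auto
  then have "?D' = (if a = b then {} else {0}) \<union> Suc ` ?D"
    by blast
  moreover have "card (Suc ` ?D) = card ?D"
    by (simp add: card_image)
  ultimately show ?thesis
    by (auto simp: hamming_dist_def)
qed

lemma hamming_dist_self [simp]: "hamming_dist x x = 0"
  by (simp add: hamming_dist_def)

lemma ip_cube_vec:
  assumes "\<bar>r\<bar> \<le> 1" and "length x = length y"
  shows "ip (2 ^ length x) (cube_vec r x) (cube_vec r y) = r ^ hamming_dist x y"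
  using assms(2)
proof (induction x arbitrary: y)
  case Nil
  then show ?case by (simp add: ip_def hamming_dist_def)
next
  case (Cons a x)
  then obtain b y' where "y = b # y'" and "length x = length y'"
    by (cases y) auto
  with Cons.IH show ?case
    using ip_tensor[of 2 "2 ^ length x"] ip_bit_vec[OF assms(1)]
    by (simp add: hamming_dist_Cons power_add)
qed

lemma ip_scale: "ip N (\<lambda>j. s * u j) (\<lambda>j. t * v j) = s * t * ip N u v"
  by (simp add: ip_def sum_distrib_left mult_ac)

lemma ip_uminus_right: "ip N u (\<lambda>j. - v j) = - ip N u v"
  by (simp add: ip_def sum_negf)

lemma ip_uminus: "ip N (\<lambda>j. - u j) (\<lambda>j. - v j) = ip N u v"
  by (simp add: ip_def)

lemma ip_extend:
  "ip (Suc N) (\<lambda>j. if j < N then u j else a) (\<lambda>j. if j < N then v j else b) = ip N u v + a * b"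
  by (simp add: ip_def)

lemma is_realization_threshold:
  fixes u :: "'a \<Rightarrow> nat \<Rightarrow> real" and v :: "'b \<Rightarrow> nat \<Rightarrow> real"
  assumes "0 \<le> \<theta>" and "\<theta> \<le> 1" and "0 < \<delta>"
    and unit_u: "\<And>x. x \<in> X \<Longrightarrow> ip N (u x) (u x) = 1"
    and unit_v: "\<And>y. y \<in> Y \<Longrightarrow> ip N (v y) (v y) = 1"
    and above: "\<And>x y. x \<in> X \<Longrightarrow> y \<in> Y \<Longrightarrow> f x y \<Longrightarrow> \<theta> + \<delta> \<le> ip N (u x) (v y)"
    and below: "\<And>x y. x \<in> X \<Longrightarrow> y \<in> Y \<Longrightarrow> \<not> f x y \<Longrightarrow> ip N (u x) (v y) \<le> \<theta> - \<delta>"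
  shows "\<exists>\<alpha> \<beta>. is_realization X Y f (Suc N) \<alpha> \<beta> (\<delta> / 2)"
proof -
  define s where "s = 1 / sqrt (1 + \<theta>)"
  define \<alpha> where "\<alpha> x = (\<lambda>j. s * (if j < N then u x j else sqrt \<theta>))" for x
  define \<beta> where "\<beta> y = (\<lambda>j. s * (if j < N then - v y j else sqrt \<theta>))" for y
  have s2: "s * s = 1 / (1 + \<theta>)" and sqrt2: "sqrt \<theta> * sqrt \<theta> = \<theta>"
    using \<open>0 \<le> \<theta>\<close> by (simp_all add: s_def real_sqrt_mult_self)
  have ip_augmented: "ip (Suc N) (\<lambda>j. s * (if j < N then p j else sqrt \<theta>)) (\<lambda>j. s * (if j < N then q j else sqrt \<theta>))
      = (ip N p q + \<theta>) / (1 + \<theta>)" for p q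
    by (simp only: ip_scale ip_extend s2 sqrt2) simp
  have ip_\<alpha>_\<beta>: "ip (Suc N) (\<alpha> x) (\<beta> y) = (\<theta> - ip N (u x) (v y)) / (1 + \<theta>)" for x y
    by (simp add: \<alpha>_def \<beta>_def ip_augmented ip_uminus_right)
  have \<delta>\<theta>: "\<delta> * \<theta> \<le> \<delta>"
    using assms(2,3) by (simp add: mult_left_le)
  have "is_realization X Y f (Suc N) \<alpha> \<beta> (\<delta> / 2)"
    unfolding is_realization_def
  proof (intro conjI ballI impI)
    show "0 < \<delta> / 2" using \<open>0 < \<delta>\<close> by simp
  next
    fix x assume "x \<in> X"
    then show "ip (Suc N) (\<alpha> x) (\<alpha> x) = 1"
      using unit_u \<open>0 \<le> \<theta>\<close> by (simp add: \<alpha>_def ip_augmented)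
  next
    fix y assume "y \<in> Y"
    then show "ip (Suc N) (\<beta> y) (\<beta> y) = 1"
      using unit_v \<open>0 \<le> \<theta>\<close> by (simp add: \<beta>_def ip_augmented ip_uminus)
  next
    fix x y assume "x \<in> X" "y \<in> Y" "\<not> f x y"
    then have "ip N (u x) (v y) \<le> \<theta> - \<delta>"
      by (rule below)
    then show "\<delta> / 2 \<le> ip (Suc N) (\<alpha> x) (\<beta> y)"
      using \<delta>\<theta> \<open>0 \<le> \<theta>\<close> by (simp add: ip_\<alpha>_\<beta> field_simps)
  next
    fix x y assume "x \<in> X" "y \<in> Y" "f x y"
    then have "\<theta> + \<delta> \<le> ip N (u x) (v y)"
      by (rule above)
    then show "ip (Suc N) (\<alpha> x) (\<beta> y) \<le> - (\<delta> / 2)"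
      using \<delta>\<theta> \<open>0 \<le> \<theta>\<close> by (simp add: ip_\<alpha>_\<beta> field_simps)
  qed
  then show ?thesis by blast
qed

lemma power_midpoint_separation:
  fixes r :: real and d :: nat
  assumes "0 \<le> r" and "r \<le> 1"
  defines "\<theta> \<equiv> r ^ d * (1 + r) / 2" and "\<delta> \<equiv> r ^ d * (1 - r) / 2"
  shows "h \<le> d \<Longrightarrow> \<theta> + \<delta> \<le> r ^ h" and "d < h \<Longrightarrow> r ^ h \<le> \<theta> - \<delta>"
proof -
  have "\<theta> + \<delta> = r ^ d" and "\<theta> - \<delta> = r ^ Suc d"
    by (simp_all add: \<theta>_def \<delta>_def field_simps)
  then show "h \<le> d \<Longrightarrow> \<theta> + \<delta> \<le> r ^ h" and "d < h \<Longrightarrow> r ^ h \<le> \<theta> - \<delta>"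
    using power_decreasing[OF _ assms(1,2)] by (simp_all only: Suc_le_eq)
qed

lemma half_le_power_one_minus_inverse: "1 / 2 \<le> (1 - 1 / (2 * real d)) ^ d"
proof -
  have "1 + real d * (- 1 / (2 * real d)) \<le> (1 + (- 1 / (2 * real d))) ^ d"
    by (rule Bernoulli_inequality) (cases d, simp_all)
  then show ?thesis
    by (cases "d = 0") simp_all
qed

lemma power_threshold_margin:
  fixes d :: nat and r :: real
  assumes "1 \<le> d"
  defines "r \<equiv> 1 - 1 / (2 * real d)" and "\<theta> \<equiv> r ^ d * (1 + r) / 2"
  shows "0 \<le> r" and "r \<le> 1" and "0 \<le> \<theta>" and "\<theta> \<le> 1"
    and "h \<le> d \<Longrightarrow> \<theta> + 1 / (8 * real d) \<le> r ^ h"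
    and "d < h \<Longrightarrow> r ^ h \<le> \<theta> - 1 / (8 * real d)"
proof -
  show "0 \<le> r" and "r \<le> 1"
    using assms(1) by (simp_all add: r_def)
  then show "0 \<le> \<theta>" and "\<theta> \<le> 1"
    using mult_le_one[of "r ^ d" "(1 + r) / 2"] power_le_one[of r d] by (simp_all add: \<theta>_def)
  have "(1 - r) / 2 = 1 / (4 * real d)"
    by (simp add: r_def)
  then have gap: "1 / (8 * real d) \<le> r ^ d * (1 - r) / 2"
    using mult_right_mono[OF half_le_power_one_minus_inverse[of d], of "1 / (4 * real d)"]
    by (simp add: r_def)
  show "\<theta> + 1 / (8 * real d) \<le> r ^ h" if "h \<le> d"
    using power_midpoint_separation(1)[OF \<open>0 \<le> r\<close> \<open>r \<le> 1\<close> that] gap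
    unfolding \<theta>_def by linarith
  show "r ^ h \<le> \<theta> - 1 / (8 * real d)" if "d < h"
    using power_midpoint_separation(2)[OF \<open>0 \<le> r\<close> \<open>r \<le> 1\<close> that] gap
    unfolding \<theta>_def by linarith
qed

theorem mainTheorem7:
  shows "\<exists>c::real. c > 0 \<and>
    (\<forall>n d::nat. 1 \<le> n \<longrightarrow> 1 \<le> d \<longrightarrow> d < n \<longrightarrow>
       (\<exists>k \<alpha> \<beta>. is_realization (cube n) (cube n) (HAM n d) k \<alpha> \<beta> (c / real d)))"
proof (intro exI[of _ "1 / 16"] conjI allI impI)
  fix n d :: nat
  assume "1 \<le> n" and "1 \<le> d" and "d < n"
  define r where "r = 1 - 1 / (2 * real d)"
  define \<theta> where "\<theta> = r ^ d * (1 + r) / 2"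
  note threshold = power_threshold_margin[OF \<open>1 \<le> d\<close>, folded r_def \<theta>_def]
  have ip_cube: "ip (2 ^ n) (cube_vec r x) (cube_vec r y) = r ^ hamming_dist x y"
    if "x \<in> cube n" and "y \<in> cube n" for x y
    using ip_cube_vec[of r x y] that threshold(1,2) by (simp add: cube_def)
  have "\<exists>\<alpha> \<beta>. is_realization (cube n) (cube n) (HAM n d) (Suc (2 ^ n)) \<alpha> \<beta> (1 / (8 * real d) / 2)"
    using threshold(3,4) \<open>1 \<le> d\<close>
    by (intro is_realization_threshold[where \<theta> = \<theta> and u = "cube_vec r" and v = "cube_vec r"])
      (auto simp: ip_cube HAM_def threshold(5,6))
  then show "\<exists>k \<alpha> \<beta>. is_realization (cube n) (cube n) (HAM n d) k \<alpha> \<beta> (1 / 16 / real d)"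
    by auto
qed simp

end
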